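(* Let $n,m,d_j\in\mathbb{Z}_+$, $j=0,1,\dots,2k$, satisfy $d_0=n$, $d_{2k}=m\ge 2n+1$, and $d_j\ge 2n+1$ for all even $j\ge 2$. Let $$F_k=B_k\circ f^{(k)}_\theta\circ B_{k-1}\circ f^{(k-1)}_\theta\circ\cdots\circ B_1\circ f^{(1)}_\theta,$$ where each $f^{(j)}_\theta:\mathbb{R}^{d_{2j-2}}\to\mathbb{R}^{d_{2j-1}}$ is an injective neural network and $B_j\in\mathbb{R}^{d_{2j}\times d_{2j-1}}$ are random matrices whose joint distribution is absolutely continuous with respect to Lebesgue measure on $\prod_{j=1}^k\mathbb{R}^{d_{2j}\times d_{2j-1}}$. Then $F_k:\mathbb{R}^n\to\mathbb{R}^m$ is injective almost surely.
   Context: Neural networks here are ReLU networks $z\mapsto W_{L+1}\phi_L(W_L\cdots\phi_1(W_1z+b_1)\cdots+b_L)$ with weight matrices $W_\ell$, biases $b_\ell$ and $\phi_\ell=\operatorname{ReLU}$ applied componentwise (arbitrary depth and widths). *)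

theory Defs
  imports "HOL-Probability.Probability"
begin

text \<open>Vectors of R^d are represented as functions nat => real vanishing outside {..<d};
  matrices as functions nat => nat => real (row, column).\<close>

definition vecs :: "nat \<Rightarrow> (nat \<Rightarrow> real) set" where
  "vecs d = {x. \<forall>i\<ge>d. x i = 0}"

definition lin :: "nat \<Rightarrow> nat \<Rightarrow> (nat \<Rightarrow> nat \<Rightarrow> real) \<Rightarrow> (nat \<Rightarrow> real) \<Rightarrow> (nat \<Rightarrow> real)" where
  "lin p q W x = (\<lambda>i. if i < q then (\<Sum>c<p. W i c * x c) else 0)"

definition relu :: "(nat \<Rightarrow> real) \<Rightarrow> (nat \<Rightarrow> real)" where
  "relu x = (\<lambda>i. max 0 (x i))"

fun hidden :: "nat list \<Rightarrow> ((nat \<Rightarrow> nat \<Rightarrow> real) \<times> (nat \<Rightarrow> real)) list \<Rightarrow> (nat \<Rightarrow> real) \<Rightarrow> (nat \<Rightarrow> real)" where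
  "hidden (p # q # ds) ((W, b) # ls) x =
     hidden (q # ds) ls (relu (\<lambda>i. lin p q W x i + (if i < q then b i else 0)))"
| "hidden _ _ x = x"

definition is_relu_net :: "nat \<Rightarrow> nat \<Rightarrow> ((nat \<Rightarrow> real) \<Rightarrow> (nat \<Rightarrow> real)) \<Rightarrow> bool" where
  "is_relu_net p q f \<longleftrightarrow>
     (\<exists>ds ls Wf. ds \<noteq> [] \<and> hd ds = p \<and> length ls + 1 = length ds \<and>
        (\<forall>x\<in>vecs p. f x = lin (last ds) q Wf (hidden ds ls x)))"

text \<open>Index set of the entries of the matrices B_1, ..., B_k, B_j in R^(d_{2j} x d_{2j-1}).\<close>
definition Bidx :: "(nat \<Rightarrow> nat) \<Rightarrow> nat \<Rightarrow> (nat \<times> nat \<times> nat) set" where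
  "Bidx d k = {(j, r, c). 1 \<le> j \<and> j \<le> k \<and> r < d (2*j) \<and> c < d (2*j - 1)}"

text \<open>F_j = B_j o f^(j) o ... o B_1 o f^(1), given all matrix entries Bv.\<close>
fun compF :: "(nat \<Rightarrow> nat) \<Rightarrow> (nat \<Rightarrow> (nat \<Rightarrow> real) \<Rightarrow> (nat \<Rightarrow> real)) \<Rightarrow>
    (nat \<times> nat \<times> nat \<Rightarrow> real) \<Rightarrow> nat \<Rightarrow> (nat \<Rightarrow> real) \<Rightarrow> (nat \<Rightarrow> real)" where
  "compF d f Bv 0 x = x"
| "compF d f Bv (Suc j) x =
     lin (d (2*j + 1)) (d (2*j + 2)) (\<lambda>r c. Bv (Suc j, r, c)) (f (Suc j) (compF d f Bv j x))"

end

(*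
  Regard everything as a function of the entries beta of B_1, ..., B_k.  Each partial
  composition F_j is piecewise affine in x, with finitely many pieces whose coefficients are
  polynomials in beta: ReLU layers only select pieces, and the B_j multiply coefficients.
  If F_j is injective but F_(j+1) = B_(j+1) o f^(j+1) o F_j is not, then B_(j+1) kills a
  nonzero vector (A x + a) - (A' y + a') for two pieces (A, a), (A', a') of f^(j+1) o F_j,
  i.e. a nonzero vector in the column space of the matrix [A | -A' | a - a'] with 2n + 1
  columns.  As B_(j+1) has at least 2n + 1 rows, a square minor of B_(j+1) L_C vanishes,
  where the columns L_C form a basis of that column space; and this minor is a polynomial in
  beta that is not identically zero.  So the bad parameters lie in finitely many zero sets
  of nonzero polynomials, which are Lebesgue-null, and absolute continuity transfers this to
  the law of B.
*)

theory Submission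
  imports Defs "Jordan_Normal_Form.Determinant" "HOL-Computational_Algebra.Polynomial"
begin

section \<open>Polynomial functions and their zero sets\<close>

inductive polyfun :: "'i set \<Rightarrow> (('i \<Rightarrow> real) \<Rightarrow> real) \<Rightarrow> bool" for I where
  polyfun_const: "polyfun I (\<lambda>x. c)"
| polyfun_var: "i \<in> I \<Longrightarrow> polyfun I (\<lambda>x. x i)"
| polyfun_add: "polyfun I p \<Longrightarrow> polyfun I q \<Longrightarrow> polyfun I (\<lambda>x. p x + q x)"
| polyfun_mult: "polyfun I p \<Longrightarrow> polyfun I q \<Longrightarrow> polyfun I (\<lambda>x. p x * q x)"

lemma polyfun_sum: "(\<And>s. s \<in> S \<Longrightarrow> polyfun I (p s)) \<Longrightarrow> polyfun I (\<lambda>x. \<Sum>s\<in>S. p s x)"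
  by (induction S rule: infinite_finite_induct) (auto intro: polyfun.intros)

lemma polyfun_prod: "(\<And>s. s \<in> S \<Longrightarrow> polyfun I (p s)) \<Longrightarrow> polyfun I (\<lambda>x. \<Prod>s\<in>S. p s x)"
  by (induction S rule: infinite_finite_induct) (auto intro: polyfun.intros)

lemma polyfun_diff: "polyfun I p \<Longrightarrow> polyfun I q \<Longrightarrow> polyfun I (\<lambda>x. p x - q x)"
  using polyfun_add[OF _ polyfun_mult[OF polyfun_const[of I "-1"]]] by simp

lemma polyfun_uminus: "polyfun I p \<Longrightarrow> polyfun I (\<lambda>x. - p x)"
  using polyfun_diff[OF polyfun_const[of I 0]] by simp

lemma polyfun_mono: "polyfun I p \<Longrightarrow> I \<subseteq> J \<Longrightarrow> polyfun J p"
  by (induction rule: polyfun.induct) (auto intro: polyfun.intros)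

lemma polyfun_cong: "polyfun I p \<Longrightarrow> (\<And>i. i \<in> I \<Longrightarrow> x i = y i) \<Longrightarrow> p x = p y"
  by (induction rule: polyfun.induct) auto

lemma polyfun_measurable: "polyfun I p \<Longrightarrow> p \<in> borel_measurable (PiM I (\<lambda>_. lborel))"
  by (induction rule: polyfun.induct) auto

lemma polyfun_fun_upd_poly: "polyfun I p \<Longrightarrow> \<exists>r. \<forall>t. p (x(i := t)) = poly r t"
proof (induction rule: polyfun.induct)
  case (polyfun_const c)
  show ?case by (intro exI[of _ "[:c:]"]) simp
next
  case (polyfun_var j)
  show ?case
    by (cases "j = i") (auto intro: exI[of _ "[:0, 1:]"] exI[of _ "[:x j:]"])
next
  case (polyfun_add p q)
  then show ?case by (metis poly_add)
next
  case (polyfun_mult p q)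
  then show ?case by (metis poly_mult)
qed

lemma polyfun_fun_upd: "polyfun (insert i J) p \<Longrightarrow> polyfun J (\<lambda>x. p (x(i := t)))"
proof (induction rule: polyfun.induct)
  case (polyfun_var j)
  then show ?case by (cases "j = i") (auto intro: polyfun.intros)
qed (auto intro: polyfun.intros)

lemma polyfun_det:
  assumes "\<And>a b. a < r \<Longrightarrow> b < r \<Longrightarrow> polyfun I (\<lambda>x. E x a b)"
  shows "polyfun I (\<lambda>x. Determinant.det (Matrix.mat r r (\<lambda>(a, b). E x a b)))"
proof -
  have perm_less: "\<pi> i < r" if "\<pi> permutes {0..<r}" "i < r" for \<pi> i
    using that permutes_in_image[of \<pi> "{0..<r}" i] by auto
  have "Determinant.det (Matrix.mat r r (\<lambda>(a, b). E x a b)) =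
    (\<Sum>\<pi>\<in>{\<pi>. \<pi> permutes {0..<r}}. signof \<pi> * (\<Prod>i\<in>{0..<r}. E x i (\<pi> i)))" for x
    by (subst det_def'[of _ r]) (auto intro!: sum.cong prod.cong simp: perm_less)
  then show ?thesis
    by (simp only:) (intro polyfun_sum polyfun_mult polyfun_const polyfun_prod; auto intro: assms perm_less)
qed

text \<open>By Fubini: off a null set of the other coordinates, \<open>p\<close> is a nonzero univariate
  polynomial in the remaining one, which has only finitely many roots.\<close>

lemma AE_polyfun_nonzero:
  assumes "finite I" "polyfun I p" "p x0 \<noteq> 0"
  shows "AE x in PiM I (\<lambda>_. lborel). p x \<noteq> 0"
  using assms
proof (induction I arbitrary: p x0 rule: finite_induct)
  case empty
  have "p x \<noteq> 0" for x
    using polyfun_cong[OF empty.prems(1), of x x0] empty.prems(2) by simp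
  then show ?case by simp
next
  case (insert i J)
  interpret product_sigma_finite "\<lambda>_. lborel :: real measure" by standard
  define Z where "Z = {x \<in> space (PiM (insert i J) (\<lambda>_. lborel)). p x = 0}"
  have Z: "Z \<in> sets (PiM (insert i J) (\<lambda>_. lborel))"
    unfolding Z_def using polyfun_measurable[OF insert.prems(1)] by measurable
  have "polyfun J (\<lambda>x. p (x(i := x0 i)))" by (rule polyfun_fun_upd[OF insert.prems(1)])
  moreover have "(\<lambda>x. p (x(i := x0 i))) x0 \<noteq> 0" using insert.prems(2) by simp
  ultimately have "AE x in PiM J (\<lambda>_. lborel). p (x(i := x0 i)) \<noteq> 0" by (rule insert.IH)
  then have "AE x in PiM J (\<lambda>_. lborel). (\<integral>\<^sup>+ y. indicator Z (x(i := y)) \<partial>lborel) = 0"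
  proof (rule eventually_mono)
    fix x assume nz: "p (x(i := x0 i)) \<noteq> 0"
    obtain r where r: "\<And>t. p (x(i := t)) = poly r t"
      using polyfun_fun_upd_poly[OF insert.prems(1)] by blast
    have "r \<noteq> 0" using nz r[of "x0 i"] by auto
    then have fin: "finite {t. poly r t = 0}" by (rule poly_roots_finite)
    have "(\<integral>\<^sup>+ y. indicator Z (x(i := y)) \<partial>lborel) \<le> (\<integral>\<^sup>+ y. indicator {t. poly r t = 0} y \<partial>lborel)"
      by (intro nn_integral_mono) (auto simp: Z_def r split: split_indicator)
    also have "\<dots> = emeasure lborel {t. poly r t = 0}"
      using fin by (intro nn_integral_indicator) (simp add: finite_imp_closed)
    also have "\<dots> = 0" using fin by (simp add: emeasure_lborel_countable countable_finite)
    finally show "(\<integral>\<^sup>+ y. indicator Z (x(i := y)) \<partial>lborel) = 0" by simp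
  qed
  then have "(\<integral>\<^sup>+ x. \<integral>\<^sup>+ y. indicator Z (x(i := y)) \<partial>lborel \<partial>PiM J (\<lambda>_. lborel)) = 0"
    by (subst nn_integral_cong_AE[where v = "\<lambda>_. 0"]) auto
  then have "emeasure (PiM (insert i J) (\<lambda>_. lborel)) Z = 0"
    using product_nn_integral_insert[OF insert.hyps, of "indicator Z"] Z
    by (simp add: nn_integral_indicator)
  then have "Z \<in> null_sets (PiM (insert i J) (\<lambda>_. lborel))" using Z by (simp add: null_sets_def)
  then show ?case by (rule AE_I') (auto simp: Z_def)
qed

definition in_proper_algebraic_set :: "'i set \<Rightarrow> ('i \<Rightarrow> real) set \<Rightarrow> bool" where
  "in_proper_algebraic_set I Z \<longleftrightarrow>
     (\<exists>T. finite T \<and> (\<forall>p\<in>T. polyfun I p \<and> (\<exists>x. p x \<noteq> 0)) \<and> (\<forall>x\<in>Z. \<exists>p\<in>T. p x = 0))"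

lemma in_proper_algebraic_setI:
  assumes "finite T" "\<And>p. p \<in> T \<Longrightarrow> polyfun I p"
    and "\<And>x. x \<in> Z \<Longrightarrow> \<exists>p\<in>T. p x = 0 \<and> (\<exists>y. p y \<noteq> 0)"
  shows "in_proper_algebraic_set I Z"
proof -
  let ?T = "{p\<in>T. \<exists>y. p y \<noteq> 0}"
  have "finite ?T" using assms(1) by simp
  moreover have "\<forall>p\<in>?T. polyfun I p \<and> (\<exists>x. p x \<noteq> 0)" using assms(2) by blast
  moreover have "\<forall>x\<in>Z. \<exists>p\<in>?T. p x = 0" using assms(3) by blast
  ultimately show ?thesis unfolding in_proper_algebraic_set_def by (intro exI[of _ ?T] conjI)
qed

lemma in_proper_algebraic_set_empty: "in_proper_algebraic_set I {}"
  unfolding in_proper_algebraic_set_def by (intro exI[of _ "{}"]) simp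

lemma in_proper_algebraic_set_subset:
  assumes "in_proper_algebraic_set I Z" "Z' \<subseteq> Z"
  shows "in_proper_algebraic_set I Z'"
proof -
  obtain T where "finite T" "\<forall>p\<in>T. polyfun I p \<and> (\<exists>x. p x \<noteq> 0)" "\<forall>x\<in>Z. \<exists>p\<in>T. p x = 0"
    using assms(1) unfolding in_proper_algebraic_set_def by blast
  with assms(2) show ?thesis unfolding in_proper_algebraic_set_def by (intro exI[of _ T]) blast
qed

lemma in_proper_algebraic_set_mono:
  assumes "in_proper_algebraic_set I Z" "I \<subseteq> J"
  shows "in_proper_algebraic_set J Z"
proof -
  obtain T where T: "finite T" "\<forall>p\<in>T. polyfun I p \<and> (\<exists>x. p x \<noteq> 0)" "\<forall>x\<in>Z. \<exists>p\<in>T. p x = 0"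
    using assms(1) unfolding in_proper_algebraic_set_def by blast
  have "\<forall>p\<in>T. polyfun J p \<and> (\<exists>x. p x \<noteq> 0)"
    using T(2) polyfun_mono[OF _ assms(2)] by blast
  with T(1,3) show ?thesis
    unfolding in_proper_algebraic_set_def by (intro exI[of _ T] conjI)
qed

lemma in_proper_algebraic_set_UN:
  assumes "finite A" "\<And>a. a \<in> A \<Longrightarrow> in_proper_algebraic_set I (Z a)"
  shows "in_proper_algebraic_set I (\<Union>a\<in>A. Z a)"
proof -
  have "\<forall>a\<in>A. \<exists>T. finite T \<and> (\<forall>p\<in>T. polyfun I p \<and> (\<exists>x. p x \<noteq> 0)) \<and> (\<forall>x\<in>Z a. \<exists>p\<in>T. p x = 0)"
    using assms(2) unfolding in_proper_algebraic_set_def by blast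
  then obtain T where T: "\<forall>a\<in>A. finite (T a) \<and> (\<forall>p\<in>T a. polyfun I p \<and> (\<exists>x. p x \<noteq> 0)) \<and>
      (\<forall>x\<in>Z a. \<exists>p\<in>T a. p x = 0)"
    by (rule bchoice[THEN exE])
  have "finite (\<Union>a\<in>A. T a)" using assms(1) T by (intro finite_UN_I) auto
  moreover have "\<forall>p\<in>(\<Union>a\<in>A. T a). polyfun I p \<and> (\<exists>x. p x \<noteq> 0)" using T by blast
  moreover have "\<forall>x\<in>(\<Union>a\<in>A. Z a). \<exists>p\<in>(\<Union>a\<in>A. T a). p x = 0" using T by blast
  ultimately show ?thesis
    unfolding in_proper_algebraic_set_def by (intro exI[of _ "\<Union>a\<in>A. T a"] conjI)
qed

lemma in_proper_algebraic_set_Un: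
  assumes "in_proper_algebraic_set I Z" "in_proper_algebraic_set I Z'"
  shows "in_proper_algebraic_set I (Z \<union> Z')"
proof -
  have "in_proper_algebraic_set I (\<Union>Y\<in>{Z, Z'}. Y)"
    using assms by (intro in_proper_algebraic_set_UN) auto
  then show ?thesis by simp
qed

lemma AE_not_in_proper_algebraic_set:
  assumes "finite I" "in_proper_algebraic_set I Z"
  shows "AE x in PiM I (\<lambda>_. lborel). x \<notin> Z"
proof -
  obtain T where T: "finite T" "\<forall>p\<in>T. polyfun I p \<and> (\<exists>x. p x \<noteq> 0)"
    and Z: "\<forall>x\<in>Z. \<exists>p\<in>T. p x = 0"
    using assms(2) unfolding in_proper_algebraic_set_def by blast
  have "AE x in PiM I (\<lambda>_. lborel). \<forall>p\<in>T. p x \<noteq> 0"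
  proof (intro eventually_ball_finite[OF T(1)] ballI)
    fix p assume "p \<in> T"
    then obtain x0 where "polyfun I p" "p x0 \<noteq> 0" using T(2) by blast
    then show "AE x in PiM I (\<lambda>_. lborel). p x \<noteq> 0" by (rule AE_polyfun_nonzero[OF assms(1)])
  qed
  then show ?thesis by eventually_elim (use Z in blast)
qed

section \<open>Singular minors on column spaces\<close>

lemma distinct_length_le_card:
  assumes "distinct xs" "set xs \<subseteq> A" "finite A"
  shows "length xs \<le> card A"
proof -
  have "length xs = card (set xs)" using assms(1) by (rule distinct_card[symmetric])
  also have "\<dots> \<le> card A" using assms(3,2) by (rule card_mono)
  finally show ?thesis .
qed

definition independent_columns :: "nat \<Rightarrow> (nat \<Rightarrow> nat \<Rightarrow> real) \<Rightarrow> nat list \<Rightarrow> bool" where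
  "independent_columns p L C \<longleftrightarrow>
     (\<forall>u. (\<forall>c<p. (\<Sum>b<length C. L c (C!b) * u b) = 0) \<longrightarrow> (\<forall>b<length C. u b = 0))"

lemma det_eq_0_of_kernel:
  fixes u :: "nat \<Rightarrow> real"
  assumes "\<And>a. a < r \<Longrightarrow> (\<Sum>b<r. E a b * u b) = 0" "b0 < r" "u b0 \<noteq> 0"
  shows "Determinant.det (Matrix.mat r r (\<lambda>(a, b). E a b)) = 0"
proof -
  have "vec r u \<noteq> 0\<^sub>v r"
    using assms(2,3) by (metis index_vec index_zero_vec(1))
  moreover have "Matrix.mat r r (\<lambda>(a, b). E a b) *\<^sub>v vec r u = 0\<^sub>v r"
    using assms(1) by (intro eq_vecI) (auto simp: scalar_prod_def atLeast0LessThan)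
  moreover have "Matrix.mat r r (\<lambda>(a, b). E a b) \<in> carrier_mat r r" by simp
  ultimately show ?thesis
    using det_0_iff_vec_prod_zero_field[of "Matrix.mat r r (\<lambda>(a, b). E a b)" r] vec_carrier by blast
qed

lemma det_gram_nonzero:
  assumes "independent_columns p L C"
  shows "Determinant.det (Matrix.mat (length C) (length C) (\<lambda>(a, b). \<Sum>c<p. L c (C!a) * L c (C!b))) \<noteq> 0"
proof
  let ?r = "length C"
  let ?G = "Matrix.mat ?r ?r (\<lambda>(a, b). \<Sum>c<p. L c (C!a) * L c (C!b))"
  assume "Determinant.det ?G = 0"
  then obtain v where v: "v \<in> carrier_vec ?r" "v \<noteq> 0\<^sub>v ?r" "?G *\<^sub>v v = 0\<^sub>v ?r"
    using det_0_iff_vec_prod_zero_field[of ?G ?r] by auto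
  have Gv: "(\<Sum>b<?r. (\<Sum>c<p. L c (C!a) * L c (C!b)) * vec_index v b) = 0" if "a < ?r" for a
    using arg_cong[OF v(3), of "\<lambda>w. w $ a"] that v(1)
    by (simp add: scalar_prod_def atLeast0LessThan)
  (* v^T G v = |L_C v|^2 *)
  have "(\<Sum>c<p. (\<Sum>a<?r. L c (C!a) * vec_index v a)\<^sup>2) =
      (\<Sum>a<?r. vec_index v a * (\<Sum>b<?r. (\<Sum>c<p. L c (C!a) * L c (C!b)) * vec_index v b))"
    by (simp add: power2_eq_square sum_distrib_left sum_distrib_right sum.swap[of _ "{..<p}"] mult_ac)
  also have "\<dots> = 0" using Gv by simp
  finally have "\<forall>c<p. (\<Sum>a<?r. L c (C!a) * vec_index v a) = 0"
    by (subst (asm) sum_nonneg_eq_0_iff) auto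
  then have "\<forall>b<?r. vec_index v b = 0"
    using assms unfolding independent_columns_def by blast
  then have "v = 0\<^sub>v ?r" using v(1) by (intro eq_vecI) auto
  with v(2) show False ..
qed

lemma dependent_column_in_span:
  assumes "independent_columns p L C" "\<not> independent_columns p L (C @ [b'])"
  shows "\<exists>u. \<forall>c<p. L c b' = (\<Sum>b<length C. L c (C!b) * u b)"
proof -
  let ?r = "length C"
  obtain v bb where v: "\<And>c. c < p \<Longrightarrow> (\<Sum>b<Suc ?r. L c ((C @ [b'])!b) * v b) = 0"
    and bb: "bb < Suc ?r" "v bb \<noteq> 0"
    using assms(2) unfolding independent_columns_def by auto
  have split: "(\<Sum>b<Suc ?r. L c ((C @ [b'])!b) * v b) = (\<Sum>b<?r. L c (C!b) * v b) + L c b' * v ?r" for c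
  proof -
    have "(\<Sum>b<?r. L c ((C @ [b'])!b) * v b) = (\<Sum>b<?r. L c (C!b) * v b)"
      by (intro sum.cong) (auto simp: nth_append)
    then show ?thesis by simp
  qed
  have "v ?r \<noteq> 0"
  proof
    assume "v ?r = 0"
    then have "\<forall>c<p. (\<Sum>b<?r. L c (C!b) * v b) = 0" using v split by simp
    then have "\<forall>b<?r. v b = 0" using assms(1) unfolding independent_columns_def by blast
    then show False using bb \<open>v ?r = 0\<close> by (metis less_Suc_eq)
  qed
  show ?thesis
  proof (intro exI[of _ "\<lambda>b. - v b / v ?r"] allI impI)
    fix c assume "c < p"
    then have "(\<Sum>b<?r. L c (C!b) * v b) + L c b' * v ?r = 0" using v split by simp
    then have "L c b' * v ?r = - (\<Sum>b<?r. L c (C!b) * v b)" by linarith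
    then have "L c b' = - (\<Sum>b<?r. L c (C!b) * v b) / v ?r"
      using \<open>v ?r \<noteq> 0\<close> by (simp add: field_simps)
    also have "\<dots> = (\<Sum>b<?r. L c (C!b) * (- v b / v ?r))"
      by (simp add: sum_divide_distrib sum_negf)
    finally show "L c b' = (\<Sum>b<?r. L c (C!b) * (- v b / v ?r))" .
  qed
qed

lemma independent_spanning_columns:
  "\<exists>C. distinct C \<and> set C \<subseteq> {..<s} \<and> independent_columns p L C \<and>
     (\<forall>b'<s. \<exists>u. \<forall>c<p. L c b' = (\<Sum>b<length C. L c (C!b) * u b))"
proof -
  define P where "P C \<longleftrightarrow> distinct C \<and> set C \<subseteq> {..<s} \<and> independent_columns p L C" for C
  have bounded: "length C < s + 1" if "P C" for C
    using that distinct_length_le_card[of C "{..<s}"] unfolding P_def by simp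
  have "P []" unfolding P_def independent_columns_def by simp
  then obtain C where C: "P C" and maximal: "\<And>C'. P C' \<Longrightarrow> length C' \<le> length C"
    using ex_has_greatest_nat[of P "[]" length "s + 1"] bounded by blast
  have "\<exists>u. \<forall>c<p. L c b' = (\<Sum>b<length C. L c (C!b) * u b)" if "b' < s" for b'
  proof (cases "b' \<in> set C")
    case True
    then obtain i where i: "i < length C" "C!i = b'" by (auto simp: in_set_conv_nth)
    have "(\<Sum>b<length C. L c (C!b) * (if b = i then 1 else 0)) = L c b'" for c
    proof -
      have "(\<Sum>b<length C. L c (C!b) * (if b = i then 1 else 0)) =
          (\<Sum>b<length C. if b = i then L c (C!b) else 0)"
        by (intro sum.cong) auto
      also have "\<dots> = L c b'" using i by simp
      finally show ?thesis .
    qed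
    then show ?thesis
      by (intro exI[of _ "\<lambda>b. if b = i then 1 else 0"] allI impI) (simp only:)
  next
    case False
    then have "\<not> P (C @ [b'])" using maximal[of "C @ [b']"] by auto
    then have "\<not> independent_columns p L (C @ [b'])" using C False that unfolding P_def by auto
    with C show ?thesis unfolding P_def by (intro dependent_column_in_span) auto
  qed
  with C show ?thesis unfolding P_def by (intro exI[of _ C] conjI allI impI) simp_all
qed

text \<open>The columns \<open>C\<close> form a basis of the column space of \<open>L\<close>, and \<open>W\<close> kills the nonzero
  vector \<open>L w\<close> of it, so \<open>W L\<^sub>C\<close> has a kernel; with \<open>s \<le> q\<close> its first \<open>|C|\<close> rows
  already form a singular square matrix.\<close>

lemma singular_minor_of_kernel:
  fixes L W :: "nat \<Rightarrow> nat \<Rightarrow> real" and w :: "nat \<Rightarrow> real"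
  assumes "s \<le> q" and "c0 < p" "(\<Sum>b<s. L c0 b * w b) \<noteq> 0"
    and kernel: "\<And>a. a < q \<Longrightarrow> (\<Sum>c<p. W a c * (\<Sum>b<s. L c b * w b)) = 0"
  obtains C where "distinct C" "set C \<subseteq> {..<s}" "independent_columns p L C"
    "Determinant.det (Matrix.mat (length C) (length C) (\<lambda>(a, b). \<Sum>c<p. W a c * L c (C!b))) = 0"
proof -
  obtain C where C: "distinct C" "set C \<subseteq> {..<s}" "independent_columns p L C"
    and span: "\<forall>b'<s. \<exists>u. \<forall>c<p. L c b' = (\<Sum>b<length C. L c (C!b) * u b)"
    using independent_spanning_columns[where s = s and p = p and L = L] by (elim exE conjE) (rule that)
  let ?r = "length C"
  have "?r \<le> s"
    using distinct_length_le_card[OF C(1,2)] by simp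
  from span have "\<forall>b'. \<exists>u. b' < s \<longrightarrow> (\<forall>c<p. L c b' = (\<Sum>b<?r. L c (C!b) * u b))" by blast
  then obtain cf where cf: "\<forall>b'. b' < s \<longrightarrow> (\<forall>c<p. L c b' = (\<Sum>b<?r. L c (C!b) * cf b' b))"
    by (rule choice[THEN exE])
  define u where "u b = (\<Sum>b'<s. cf b' b * w b')" for b
  have Lw: "(\<Sum>b'<s. L c b' * w b') = (\<Sum>b<?r. L c (C!b) * u b)" if "c < p" for c
  proof -
    have "(\<Sum>b'<s. L c b' * w b') = (\<Sum>b'<s. (\<Sum>b<?r. L c (C!b) * cf b' b) * w b')"
    proof (rule sum.cong[OF refl])
      fix b' assume "b' \<in> {..<s}"
      then have "L c b' = (\<Sum>b<?r. L c (C!b) * cf b' b)" using cf that by blast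
      then show "L c b' * w b' = (\<Sum>b<?r. L c (C!b) * cf b' b) * w b'" by (rule arg_cong)
    qed
    also have "\<dots> = (\<Sum>b'<s. \<Sum>b<?r. L c (C!b) * cf b' b * w b')"
      by (simp add: sum_distrib_right)
    also have "\<dots> = (\<Sum>b<?r. L c (C!b) * u b)"
      unfolding u_def by (subst sum.swap) (simp add: sum_distrib_left mult_ac)
    finally show ?thesis .
  qed
  obtain b0 where b0: "b0 < ?r" "u b0 \<noteq> 0"
  proof (rule ccontr)
    assume "\<not> thesis"
    with that have "\<forall>b<?r. u b = 0" by blast
    then have "(\<Sum>b<?r. L c0 (C!b) * u b) = 0" by (intro sum.neutral ballI) simp
    with Lw[OF assms(2)] assms(3) show False by simp
  qed
  have kernel_C: "(\<Sum>b<?r. (\<Sum>c<p. W a c * L c (C!b)) * u b) = 0" if "a < ?r" for a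
  proof -
    have "(\<Sum>b<?r. (\<Sum>c<p. W a c * L c (C!b)) * u b) = (\<Sum>c<p. W a c * (\<Sum>b<?r. L c (C!b) * u b))"
      by (simp add: sum_distrib_left sum_distrib_right mult_ac sum.swap[of _ "{..<?r}"])
    also have "\<dots> = (\<Sum>c<p. W a c * (\<Sum>b<s. L c b * w b))"
      by (rule sum.cong[OF refl]) (simp add: Lw)
    also have "\<dots> = 0" using kernel that \<open>?r \<le> s\<close> \<open>s \<le> q\<close> by simp
    finally show ?thesis .
  qed
  show thesis
    by (rule that[OF C]) (rule det_eq_0_of_kernel[where E = "\<lambda>a b. \<Sum>c<p. W a c * L c (C!b)", OF kernel_C b0])
qed

text \<open>The minor is not the zero polynomial: for \<open>W = L\<^sub>C\<^sup>T\<close> on the first \<open>|C|\<close> rows it is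
  the Gram determinant \<open>det (L\<^sub>C\<^sup>T L\<^sub>C) \<noteq> 0\<close>; this needs \<open>L\<close> not to depend on the entries
  of \<open>W\<close>.\<close>

lemma column_space_kernel_algebraic:
  fixes L :: "(('j \<times> nat \<times> nat) \<Rightarrow> real) \<Rightarrow> nat \<Rightarrow> nat \<Rightarrow> real"
  assumes L: "\<And>c b. polyfun J (\<lambda>\<beta>. L \<beta> c b)" and "J \<subseteq> I" and layer: "\<And>a c. (j, a, c) \<notin> J"
    and W: "\<And>a c. a < q \<Longrightarrow> c < p \<Longrightarrow> (j, a, c) \<in> I" and "s \<le> q"
  shows "in_proper_algebraic_set I {\<beta>. \<exists>w. (\<exists>c<p. (\<Sum>b<s. L \<beta> c b * w b) \<noteq> 0) \<and>
            (\<forall>a<q. (\<Sum>c<p. \<beta> (j, a, c) * (\<Sum>b<s. L \<beta> c b * w b)) = 0)}"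
proof -
  define minor where "minor C \<beta> =
    Determinant.det (Matrix.mat (length C) (length C) (\<lambda>(a, b). \<Sum>c<p. \<beta> (j, a, c) * L \<beta> c (C!b)))"
    for C \<beta>
  let ?Cs = "{C. set C \<subseteq> {..<s} \<and> distinct C}"
  show ?thesis
  proof (rule in_proper_algebraic_setI[of "minor ` ?Cs"])
    show "finite (minor ` ?Cs)" using finite_subset_distinct[of "{..<s}"] by simp
  next
    fix P assume "P \<in> minor ` ?Cs"
    then obtain C where C: "set C \<subseteq> {..<s}" "distinct C" and P: "P = minor C" by auto
    have "length C \<le> s" using distinct_length_le_card[OF C(2,1)] by simp
    then have "(j, a, c) \<in> I" if "a < length C" "c < p" for a c
      using W that \<open>s \<le> q\<close> by simp
    then show "polyfun I P"
      unfolding P minor_def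
      by (intro polyfun_det polyfun_sum polyfun_mult polyfun_var polyfun_mono[OF L \<open>J \<subseteq> I\<close>]) auto
  next
    fix \<beta> assume "\<beta> \<in> {\<beta>. \<exists>w. (\<exists>c<p. (\<Sum>b<s. L \<beta> c b * w b) \<noteq> 0) \<and>
            (\<forall>a<q. (\<Sum>c<p. \<beta> (j, a, c) * (\<Sum>b<s. L \<beta> c b * w b)) = 0)}"
    then obtain w c0 where c0: "c0 < p" "(\<Sum>b<s. L \<beta> c0 b * w b) \<noteq> 0"
      and kernel: "\<And>a. a < q \<Longrightarrow> (\<Sum>c<p. \<beta> (j, a, c) * (\<Sum>b<s. L \<beta> c b * w b)) = 0"
      by blast
    obtain C where C: "distinct C" "set C \<subseteq> {..<s}" "independent_columns p (L \<beta>) C"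
      and singular: "minor C \<beta> = 0"
      using singular_minor_of_kernel[where W = "\<lambda>a c. \<beta> (j, a, c)", OF \<open>s \<le> q\<close> c0 kernel]
      unfolding minor_def by blast
    define \<beta>' where "\<beta>' = (\<lambda>(j', a, c). if j' = j then (if a < length C then L \<beta> c (C!a) else 0)
      else \<beta> (j', a, c))"
    have "\<beta>' i = \<beta> i" if "i \<in> J" for i
      using that layer by (cases i) (auto simp: \<beta>'_def)
    then have "L \<beta>' c b = L \<beta> c b" for c b
      by (rule polyfun_cong[OF L])
    then have "minor C \<beta>' =
        Determinant.det (Matrix.mat (length C) (length C) (\<lambda>(a, b). \<Sum>c<p. L \<beta> c (C!a) * L \<beta> c (C!b)))"
      unfolding minor_def by (intro arg_cong[where f = Determinant.det] eq_matI) (auto simp: \<beta>'_def)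
    then have "minor C \<beta>' \<noteq> 0" using det_gram_nonzero[OF C(3)] by simp
    with C singular show "\<exists>P\<in>minor ` ?Cs. P \<beta> = 0 \<and> (\<exists>\<beta>'. P \<beta>' \<noteq> 0)" by blast
  qed
qed

section \<open>Piecewise affine maps with polynomial coefficients\<close>

definition affine_map :: "nat \<Rightarrow> (nat \<Rightarrow> nat \<Rightarrow> real) \<Rightarrow> (nat \<Rightarrow> real) \<Rightarrow> (nat \<Rightarrow> real) \<Rightarrow> nat \<Rightarrow> real" where
  "affine_map n A b x = (\<lambda>i. (\<Sum>c<n. A i c * x c) + b i)"

type_synonym 'i affine_piece = "(('i \<Rightarrow> real) \<Rightarrow> nat \<Rightarrow> nat \<Rightarrow> real) \<times> (('i \<Rightarrow> real) \<Rightarrow> nat \<Rightarrow> real)"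

definition poly_piece :: "'i set \<Rightarrow> 'i affine_piece \<Rightarrow> bool" where
  "poly_piece I \<sigma> \<longleftrightarrow> (\<forall>i c. polyfun I (\<lambda>\<beta>. fst \<sigma> \<beta> i c)) \<and> (\<forall>i. polyfun I (\<lambda>\<beta>. snd \<sigma> \<beta> i))"

definition poly_pw_affine ::
    "'i set \<Rightarrow> nat \<Rightarrow> nat \<Rightarrow> (('i \<Rightarrow> real) \<Rightarrow> (nat \<Rightarrow> real) \<Rightarrow> nat \<Rightarrow> real) \<Rightarrow> bool" where
  "poly_pw_affine I n q G \<longleftrightarrow> (\<forall>\<beta>. \<forall>x\<in>vecs n. G \<beta> x \<in> vecs q) \<and>
     (\<exists>S. finite S \<and> (\<forall>\<sigma>\<in>S. poly_piece I \<sigma>) \<and>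
        (\<forall>\<beta>. \<forall>x\<in>vecs n. \<exists>\<sigma>\<in>S. G \<beta> x = affine_map n (fst \<sigma> \<beta>) (snd \<sigma> \<beta>) x))"

lemma poly_pw_affineI:
  assumes "\<And>\<beta> x. x \<in> vecs n \<Longrightarrow> G \<beta> x \<in> vecs q"
    and "finite S" "\<And>\<sigma>. \<sigma> \<in> S \<Longrightarrow> poly_piece I \<sigma>"
    and "\<And>\<beta> x. x \<in> vecs n \<Longrightarrow> \<exists>\<sigma>\<in>S. G \<beta> x = affine_map n (fst \<sigma> \<beta>) (snd \<sigma> \<beta>) x"
  shows "poly_pw_affine I n q G"
  unfolding poly_pw_affine_def
  by (intro conjI allI ballI exI[of _ S]) (simp_all add: assms)

lemma poly_pw_affine_vecs: "poly_pw_affine I n q G \<Longrightarrow> x \<in> vecs n \<Longrightarrow> G \<beta> x \<in> vecs q"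
  by (simp add: poly_pw_affine_def)

lemma poly_pw_affine_pieces:
  assumes "poly_pw_affine I n q G"
  obtains S where "finite S" "\<forall>\<sigma>\<in>S. poly_piece I \<sigma>"
    "\<forall>\<beta>. \<forall>x\<in>vecs n. \<exists>\<sigma>\<in>S. G \<beta> x = affine_map n (fst \<sigma> \<beta>) (snd \<sigma> \<beta>) x"
proof -
  from assms have "\<exists>S. finite S \<and> (\<forall>\<sigma>\<in>S. poly_piece I \<sigma>) \<and>
      (\<forall>\<beta>. \<forall>x\<in>vecs n. \<exists>\<sigma>\<in>S. G \<beta> x = affine_map n (fst \<sigma> \<beta>) (snd \<sigma> \<beta>) x)"
    unfolding poly_pw_affine_def by (rule conjunct2)
  then show thesis using that by (elim exE conjE)
qed

lemma poly_pw_affine_mono: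
  assumes "poly_pw_affine I n q G" "I \<subseteq> J"
  shows "poly_pw_affine J n q G"
proof -
  obtain S where S: "finite S" "\<forall>\<sigma>\<in>S. poly_piece I \<sigma>"
    and pieces: "\<forall>\<beta>. \<forall>x\<in>vecs n. \<exists>\<sigma>\<in>S. G \<beta> x = affine_map n (fst \<sigma> \<beta>) (snd \<sigma> \<beta>) x"
    using assms(1) by (rule poly_pw_affine_pieces)
  have "poly_piece J \<sigma>" if "\<sigma> \<in> S" for \<sigma>
    using S(2) that polyfun_mono[OF _ assms(2)] unfolding poly_piece_def by blast
  with S(1) pieces show ?thesis
    by (intro poly_pw_affineI[of n G q S]) (simp_all add: poly_pw_affine_vecs[OF assms(1)])
qed

lemma poly_pw_affine_cong:
  "poly_pw_affine I n q G \<Longrightarrow> (\<And>\<beta> x. x \<in> vecs n \<Longrightarrow> G' \<beta> x = G \<beta> x) \<Longrightarrow> poly_pw_affine I n q G'"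
  unfolding poly_pw_affine_def by simp

lemma poly_pw_affine_id: "poly_pw_affine I n n (\<lambda>\<beta> x. x)"
proof (rule poly_pw_affineI[where S = "{(\<lambda>\<beta> i c. if i = c then 1 else 0, \<lambda>\<beta> i. 0)}"])
  fix \<beta> x assume x: "x \<in> vecs n"
  have "(\<Sum>c<n. (if i = c then 1 else 0) * x c) = (if i < n then x i else 0)" for i
    by (induction n) (auto simp: less_Suc_eq)
  then have "x = affine_map n (\<lambda>i c. if i = c then 1 else 0) (\<lambda>i. 0) x"
    using x by (auto simp: affine_map_def vecs_def)
  then show "\<exists>\<sigma>\<in>{(\<lambda>\<beta> i c. if i = c then 1 else 0, \<lambda>\<beta> i. 0)}. x = affine_map n (fst \<sigma> \<beta>) (snd \<sigma> \<beta>) x"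
    by simp
qed (auto simp: poly_piece_def intro: polyfun_const)

lemma lin_affine_map:
  "lin p q W (affine_map n A b x) =
     affine_map n (\<lambda>i c. if i < q then \<Sum>c'<p. W i c' * A c' c else 0) (lin p q W b) x"
proof
  fix i
  show "lin p q W (affine_map n A b x) i =
      affine_map n (\<lambda>i c. if i < q then \<Sum>c'<p. W i c' * A c' c else 0) (lin p q W b) x i"
  proof (cases "i < q")
    case True
    have "lin p q W (affine_map n A b x) i = (\<Sum>c'<p. W i c' * ((\<Sum>c<n. A c' c * x c) + b c'))"
      using True by (simp add: lin_def affine_map_def)
    also have "\<dots> = (\<Sum>c'<p. (\<Sum>c<n. W i c' * A c' c * x c) + W i c' * b c')"
      by (simp add: distrib_left sum_distrib_left mult.assoc)
    also have "\<dots> = (\<Sum>c'<p. \<Sum>c<n. W i c' * A c' c * x c) + (\<Sum>c'<p. W i c' * b c')"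
      by (rule sum.distrib)
    also have "(\<Sum>c'<p. \<Sum>c<n. W i c' * A c' c * x c) = (\<Sum>c<n. \<Sum>c'<p. W i c' * A c' c * x c)"
      by (rule sum.swap)
    also have "\<dots> = (\<Sum>c<n. (\<Sum>c'<p. W i c' * A c' c) * x c)"
      by (simp add: sum_distrib_right)
    finally show ?thesis using True by (simp add: lin_def affine_map_def)
  qed (simp add: lin_def affine_map_def)
qed

lemma poly_pw_affine_lin:
  fixes G :: "('i \<Rightarrow> real) \<Rightarrow> (nat \<Rightarrow> real) \<Rightarrow> nat \<Rightarrow> real"
  assumes G: "poly_pw_affine I n p G"
    and W: "\<And>r c. r < q \<Longrightarrow> c < p \<Longrightarrow> polyfun I (\<lambda>\<beta>. W \<beta> r c)"
  shows "poly_pw_affine I n q (\<lambda>\<beta> x. lin p q (W \<beta>) (G \<beta> x))"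
proof -
  obtain S where S: "finite S" "\<forall>\<sigma>\<in>S. poly_piece I \<sigma>"
    and pieces: "\<forall>\<beta>. \<forall>x\<in>vecs n. \<exists>\<sigma>\<in>S. G \<beta> x = affine_map n (fst \<sigma> \<beta>) (snd \<sigma> \<beta>) x"
    using G by (rule poly_pw_affine_pieces)
  define comp :: "'i affine_piece \<Rightarrow> 'i affine_piece" where "comp \<sigma> =
    (\<lambda>\<beta> i c. if i < q then \<Sum>c'<p. W \<beta> i c' * fst \<sigma> \<beta> c' c else 0, \<lambda>\<beta>. lin p q (W \<beta>) (snd \<sigma> \<beta>))"
    for \<sigma>
  show ?thesis
  proof (rule poly_pw_affineI[where S = "comp ` S"])
    fix \<sigma>' assume "\<sigma>' \<in> comp ` S"
    then obtain \<sigma> where \<sigma>': "\<sigma>' = comp \<sigma>" and "poly_piece I \<sigma>" using S(2) by blast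
    then have A: "polyfun I (\<lambda>\<beta>. fst \<sigma> \<beta> i c)" and b: "polyfun I (\<lambda>\<beta>. snd \<sigma> \<beta> i)" for i c
      by (simp_all add: poly_piece_def)
    have "polyfun I (\<lambda>\<beta>. if i < q then \<Sum>c'<p. W \<beta> i c' * fst \<sigma> \<beta> c' c else 0)" for i c
      by (cases "i < q") (auto intro!: polyfun_sum polyfun_mult W A intro: polyfun_const)
    moreover have "polyfun I (\<lambda>\<beta>. lin p q (W \<beta>) (snd \<sigma> \<beta>) i)" for i
      unfolding lin_def
      by (cases "i < q") (auto intro!: polyfun_sum polyfun_mult W b intro: polyfun_const)
    ultimately show "poly_piece I \<sigma>'" by (simp add: \<sigma>' comp_def poly_piece_def)
  next
    fix \<beta> x assume "x \<in> vecs n"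
    then obtain \<sigma> where "\<sigma> \<in> S" "G \<beta> x = affine_map n (fst \<sigma> \<beta>) (snd \<sigma> \<beta>) x" using pieces by blast
    then show "\<exists>\<sigma>'\<in>comp ` S. lin p q (W \<beta>) (G \<beta> x) = affine_map n (fst \<sigma>' \<beta>) (snd \<sigma>' \<beta>) x"
      by (intro bexI[of _ "comp \<sigma>"]) (simp_all add: comp_def lin_affine_map)
  next
    fix \<beta> x show "lin p q (W \<beta>) (G \<beta> x) \<in> vecs q" by (simp add: lin_def vecs_def)
  qed (use S(1) in simp)
qed

lemma poly_pw_affine_add_bias:
  fixes G :: "('i \<Rightarrow> real) \<Rightarrow> (nat \<Rightarrow> real) \<Rightarrow> nat \<Rightarrow> real"
  assumes G: "poly_pw_affine I n q G"
  shows "poly_pw_affine I n q (\<lambda>\<beta> x i. G \<beta> x i + (if i < q then e i else 0))"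
proof -
  obtain S where S: "finite S" "\<forall>\<sigma>\<in>S. poly_piece I \<sigma>"
    and pieces: "\<forall>\<beta>. \<forall>x\<in>vecs n. \<exists>\<sigma>\<in>S. G \<beta> x = affine_map n (fst \<sigma> \<beta>) (snd \<sigma> \<beta>) x"
    using G by (rule poly_pw_affine_pieces)
  define shift :: "'i affine_piece \<Rightarrow> 'i affine_piece"
    where "shift \<sigma> = (fst \<sigma>, \<lambda>\<beta> i. snd \<sigma> \<beta> i + (if i < q then e i else 0))" for \<sigma>
  show ?thesis
  proof (rule poly_pw_affineI[where S = "shift ` S"])
    fix \<sigma>' assume "\<sigma>' \<in> shift ` S"
    then obtain \<sigma> where \<sigma>': "\<sigma>' = shift \<sigma>" and "poly_piece I \<sigma>" using S(2) by blast
    then have "polyfun I (\<lambda>\<beta>. snd \<sigma> \<beta> i + (if i < q then e i else 0))" for i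
      by (simp add: poly_piece_def polyfun_add polyfun_const)
    with \<open>poly_piece I \<sigma>\<close> show "poly_piece I \<sigma>'" by (simp add: \<sigma>' shift_def poly_piece_def)
  next
    fix \<beta> x assume "x \<in> vecs n"
    then obtain \<sigma> where "\<sigma> \<in> S" "G \<beta> x = affine_map n (fst \<sigma> \<beta>) (snd \<sigma> \<beta>) x" using pieces by blast
    then show "\<exists>\<sigma>'\<in>shift ` S.
        (\<lambda>i. G \<beta> x i + (if i < q then e i else 0)) = affine_map n (fst \<sigma>' \<beta>) (snd \<sigma>' \<beta>) x"
      by (intro bexI[of _ "shift \<sigma>"]) (simp_all add: shift_def affine_map_def add.assoc)
  next
    fix \<beta> x assume "x \<in> vecs n"
    then have "G \<beta> x \<in> vecs q" by (rule poly_pw_affine_vecs[OF G])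
    then show "(\<lambda>i. G \<beta> x i + (if i < q then e i else 0)) \<in> vecs q" by (simp add: vecs_def)
  qed (use S(1) in simp)
qed

lemma poly_pw_affine_relu:
  fixes G :: "('i \<Rightarrow> real) \<Rightarrow> (nat \<Rightarrow> real) \<Rightarrow> nat \<Rightarrow> real"
  assumes G: "poly_pw_affine I n q G"
  shows "poly_pw_affine I n q (\<lambda>\<beta> x. relu (G \<beta> x))"
proof -
  obtain S where S: "finite S" "\<forall>\<sigma>\<in>S. poly_piece I \<sigma>"
    and pieces: "\<forall>\<beta>. \<forall>x\<in>vecs n. \<exists>\<sigma>\<in>S. G \<beta> x = affine_map n (fst \<sigma> \<beta>) (snd \<sigma> \<beta>) x"
    using G by (rule poly_pw_affine_pieces)
  (* where exactly the coordinates in U are positive, ReLU zeroes the other rows of a piece *)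
  define mask :: "nat set \<Rightarrow> 'i affine_piece \<Rightarrow> 'i affine_piece" where "mask U \<sigma> =
    (\<lambda>\<beta> i c. if i \<in> U then fst \<sigma> \<beta> i c else 0, \<lambda>\<beta> i. if i \<in> U then snd \<sigma> \<beta> i else 0)" for U \<sigma>
  show ?thesis
  proof (rule poly_pw_affineI[where S = "(\<lambda>(U, \<sigma>). mask U \<sigma>) ` (Pow {..<q} \<times> S)"])
    fix \<sigma>' assume "\<sigma>' \<in> (\<lambda>(U, \<sigma>). mask U \<sigma>) ` (Pow {..<q} \<times> S)"
    then obtain U \<sigma> where \<sigma>': "\<sigma>' = mask U \<sigma>" and "\<sigma> \<in> S" by auto
    then have "poly_piece I \<sigma>" using S(2) by blast
    then have A: "polyfun I (\<lambda>\<beta>. fst \<sigma> \<beta> i c)" and b: "polyfun I (\<lambda>\<beta>. snd \<sigma> \<beta> i)" for i c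
      by (simp_all add: poly_piece_def)
    have "polyfun I (\<lambda>\<beta>. if i \<in> U then fst \<sigma> \<beta> i c else 0)" for i c
      using A by (cases "i \<in> U") (simp_all add: polyfun_const)
    moreover have "polyfun I (\<lambda>\<beta>. if i \<in> U then snd \<sigma> \<beta> i else 0)" for i
      using b by (cases "i \<in> U") (simp_all add: polyfun_const)
    ultimately show "poly_piece I \<sigma>'" by (simp add: \<sigma>' mask_def poly_piece_def)
  next
    fix \<beta> x assume x: "x \<in> vecs n"
    then obtain \<sigma> where \<sigma>: "\<sigma> \<in> S" "G \<beta> x = affine_map n (fst \<sigma> \<beta>) (snd \<sigma> \<beta>) x"
      using pieces by blast
    define U where "U = {i. i < q \<and> G \<beta> x i > 0}"
    have nonpos: "G \<beta> x i \<le> 0" if "i \<notin> U" for i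
      using that poly_pw_affine_vecs[OF G x] unfolding U_def vecs_def by (cases "i < q") auto
    have "relu (G \<beta> x) = affine_map n (fst (mask U \<sigma>) \<beta>) (snd (mask U \<sigma>) \<beta>) x"
    proof
      fix i
      show "relu (G \<beta> x) i = affine_map n (fst (mask U \<sigma>) \<beta>) (snd (mask U \<sigma>) \<beta>) x i"
      proof (cases "i \<in> U")
        case True
        then have "0 < G \<beta> x i" by (simp add: U_def)
        then show ?thesis using True by (simp add: relu_def mask_def \<sigma>(2) affine_map_def max_def)
      next
        case False
        then have "G \<beta> x i \<le> 0" by (rule nonpos)
        then show ?thesis using False by (simp add: relu_def mask_def affine_map_def)
      qed
    qed
    moreover have "mask U \<sigma> \<in> (\<lambda>(U, \<sigma>). mask U \<sigma>) ` (Pow {..<q} \<times> S)"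
      using \<sigma>(1) by (intro image_eqI[of _ _ "(U, \<sigma>)"]) (auto simp: U_def)
    ultimately show "\<exists>\<sigma>'\<in>(\<lambda>(U, \<sigma>). mask U \<sigma>) ` (Pow {..<q} \<times> S).
        relu (G \<beta> x) = affine_map n (fst \<sigma>' \<beta>) (snd \<sigma>' \<beta>) x"
      by blast
  next
    fix \<beta> x assume "x \<in> vecs n"
    then have "G \<beta> x \<in> vecs q" by (rule poly_pw_affine_vecs[OF G])
    then show "relu (G \<beta> x) \<in> vecs q" by (simp add: vecs_def relu_def)
  qed (use S(1) in simp)
qed

lemma poly_pw_affine_hidden:
  "poly_pw_affine I n (hd ds) G \<Longrightarrow> length ls + 1 = length ds \<Longrightarrow>
    poly_pw_affine I n (last ds) (\<lambda>\<beta> x. hidden ds ls (G \<beta> x))"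
proof (induction ls arbitrary: ds G)
  case Nil
  then obtain p where "ds = [p]" by (cases ds) auto
  with Nil show ?case by simp
next
  case (Cons l ls)
  obtain W b where l: "l = (W, b)" by (cases l)
  obtain p q ds' where ds: "ds = p # q # ds'"
    using Cons.prems(2) by (metis Suc_eq_plus1 length_Suc_conv)
  let ?layer = "\<lambda>\<beta> x. relu (\<lambda>i. lin p q W (G \<beta> x) i + (if i < q then b i else 0))"
  have "poly_pw_affine I n q (\<lambda>\<beta> x. lin p q W (G \<beta> x))"
    using Cons.prems(1) ds by (intro poly_pw_affine_lin) (auto intro: polyfun_const)
  then have "poly_pw_affine I n q ?layer"
    by (intro poly_pw_affine_relu poly_pw_affine_add_bias[where G = "\<lambda>\<beta> x. lin p q W (G \<beta> x)"])
  then have "poly_pw_affine I n (last (q # ds')) (\<lambda>\<beta> x. hidden (q # ds') ls (?layer \<beta> x))"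
    using Cons.IH[of "q # ds'"] Cons.prems(2) ds by simp
  then show ?case by (simp add: ds l)
qed

lemma poly_pw_affine_relu_net:
  assumes "is_relu_net p q f" "poly_pw_affine I n p G"
  shows "poly_pw_affine I n q (\<lambda>\<beta> x. f (G \<beta> x))"
proof -
  obtain ds ls Wf where net: "ds \<noteq> []" "hd ds = p" "length ls + 1 = length ds"
    "\<And>x. x \<in> vecs p \<Longrightarrow> f x = lin (last ds) q Wf (hidden ds ls x)"
    using assms(1) unfolding is_relu_net_def by blast
  have "poly_pw_affine I n (last ds) (\<lambda>\<beta> x. hidden ds ls (G \<beta> x))"
    using poly_pw_affine_hidden[of I n ds G ls] assms(2) net by simp
  then have "poly_pw_affine I n q (\<lambda>\<beta> x. lin (last ds) q Wf (hidden ds ls (G \<beta> x)))"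
    by (rule poly_pw_affine_lin) (rule polyfun_const)
  then show ?thesis
    by (rule poly_pw_affine_cong) (simp add: net(4) poly_pw_affine_vecs[OF assms(2)])
qed

definition secant_matrix :: "nat \<Rightarrow> (nat \<Rightarrow> nat \<Rightarrow> real) \<Rightarrow> (nat \<Rightarrow> real) \<Rightarrow>
    (nat \<Rightarrow> nat \<Rightarrow> real) \<Rightarrow> (nat \<Rightarrow> real) \<Rightarrow> nat \<Rightarrow> nat \<Rightarrow> real" where
  "secant_matrix n A a A' a' c b =
     (if b < n then A c b else if b < 2*n then - A' c (b - n) else a c - a' c)"

definition secant_vector :: "nat \<Rightarrow> (nat \<Rightarrow> real) \<Rightarrow> (nat \<Rightarrow> real) \<Rightarrow> nat \<Rightarrow> real" where
  "secant_vector n x y b = (if b < n then x b else if b < 2*n then y (b - n) else 1)"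

lemma sum_lessThan_add:
  fixes g :: "nat \<Rightarrow> 'a::comm_monoid_add"
  shows "(\<Sum>b<m + k. g b) = (\<Sum>b<m. g b) + (\<Sum>b<k. g (m + b))"
  by (induction k) (auto simp: add.assoc)

lemma secant_matrix_mult:
  "(\<Sum>b<2*n+1. secant_matrix n A a A' a' c b * secant_vector n x y b) =
     affine_map n A a x c - affine_map n A' a' y c"
proof -
  let ?g = "\<lambda>b. secant_matrix n A a A' a' c b * secant_vector n x y b"
  have "(\<Sum>b<2*n+1. ?g b) = (\<Sum>b<n. ?g b) + (\<Sum>b<n. ?g (n + b)) + ?g (2*n)"
    by (simp add: mult_2 sum_lessThan_add)
  also have "\<dots> = (\<Sum>b<n. A c b * x b) - (\<Sum>b<n. A' c b * y b) + (a c - a' c)"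
    by (simp add: secant_matrix_def secant_vector_def sum_negf)
  finally show ?thesis by (simp add: affine_map_def)
qed

lemma vecs_neq_coordinate:
  assumes "x \<in> vecs p" "y \<in> vecs p" "x \<noteq> y"
  obtains c where "c < p" "x c \<noteq> y c"
proof -
  have "\<exists>c<p. x c \<noteq> y c"
  proof (rule ccontr)
    assume "\<not> (\<exists>c<p. x c \<noteq> y c)"
    then have "x c = y c" for c using assms(1,2) by (cases "c < p") (auto simp: vecs_def)
    then have "x = y" by (rule ext)
    with assms(3) show False ..
  qed
  with that show thesis by blast
qed

lemma noninjective_layer_algebraic:
  fixes G :: "(('j \<times> nat \<times> nat) \<Rightarrow> real) \<Rightarrow> (nat \<Rightarrow> real) \<Rightarrow> nat \<Rightarrow> real"
  assumes G: "poly_pw_affine J n p G" and "J \<subseteq> I" and layer: "\<And>a c. (j, a, c) \<notin> J"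
    and W: "\<And>a c. a < q \<Longrightarrow> c < p \<Longrightarrow> (j, a, c) \<in> I" and width: "2*n + 1 \<le> q"
  shows "in_proper_algebraic_set I
    {\<beta>. inj_on (G \<beta>) (vecs n) \<and> \<not> inj_on (\<lambda>x. lin p q (\<lambda>a c. \<beta> (j, a, c)) (G \<beta> x)) (vecs n)}"
proof -
  obtain S where S: "finite S" "\<forall>\<sigma>\<in>S. poly_piece J \<sigma>"
    and pieces: "\<forall>\<beta>. \<forall>x\<in>vecs n. \<exists>\<sigma>\<in>S. G \<beta> x = affine_map n (fst \<sigma> \<beta>) (snd \<sigma> \<beta>) x"
    using G by (rule poly_pw_affine_pieces)
  define L :: "('j \<times> nat \<times> nat) affine_piece \<Rightarrow> ('j \<times> nat \<times> nat) affine_piece \<Rightarrow>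
      ('j \<times> nat \<times> nat \<Rightarrow> real) \<Rightarrow> nat \<Rightarrow> nat \<Rightarrow> real"
    where "L \<sigma> \<tau> \<beta> = secant_matrix n (fst \<sigma> \<beta>) (snd \<sigma> \<beta>) (fst \<tau> \<beta>) (snd \<tau> \<beta>)" for \<sigma> \<tau> \<beta>
  define K where "K \<sigma> \<tau> = {\<beta>. \<exists>w. (\<exists>c<p. (\<Sum>b<2*n+1. L \<sigma> \<tau> \<beta> c b * w b) \<noteq> 0) \<and>
      (\<forall>a<q. (\<Sum>c<p. \<beta> (j, a, c) * (\<Sum>b<2*n+1. L \<sigma> \<tau> \<beta> c b * w b)) = 0)}" for \<sigma> \<tau>
  have "in_proper_algebraic_set I (\<Union>\<rho>\<in>S \<times> S. K (fst \<rho>) (snd \<rho>))"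
  proof (rule in_proper_algebraic_set_UN)
    fix \<rho> assume "\<rho> \<in> S \<times> S"
    then have "poly_piece J (fst \<rho>)" "poly_piece J (snd \<rho>)" using S(2) by auto
    then have "polyfun J (\<lambda>\<beta>. L (fst \<rho>) (snd \<rho>) \<beta> c b)" for c b
      by (cases "b < n"; cases "b < 2*n";
          simp add: L_def secant_matrix_def poly_piece_def polyfun_uminus polyfun_diff)
    then show "in_proper_algebraic_set I (K (fst \<rho>) (snd \<rho>))"
      unfolding K_def
      by (rule column_space_kernel_algebraic[where L = "L (fst \<rho>) (snd \<rho>)", OF _ \<open>J \<subseteq> I\<close> layer W width])
  qed (use S(1) in simp)
  moreover have "{\<beta>. inj_on (G \<beta>) (vecs n) \<and> \<not> inj_on (\<lambda>x. lin p q (\<lambda>a c. \<beta> (j, a, c)) (G \<beta> x)) (vecs n)}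
      \<subseteq> (\<Union>\<rho>\<in>S \<times> S. K (fst \<rho>) (snd \<rho>))"
  proof
    fix \<beta> assume "\<beta> \<in> {\<beta>. inj_on (G \<beta>) (vecs n) \<and>
      \<not> inj_on (\<lambda>x. lin p q (\<lambda>a c. \<beta> (j, a, c)) (G \<beta> x)) (vecs n)}"
    then obtain x y where xy: "x \<in> vecs n" "y \<in> vecs n" "G \<beta> x \<noteq> G \<beta> y"
      and same: "lin p q (\<lambda>a c. \<beta> (j, a, c)) (G \<beta> x) = lin p q (\<lambda>a c. \<beta> (j, a, c)) (G \<beta> y)"
      unfolding inj_on_def by blast
    obtain \<sigma> where \<sigma>: "\<sigma> \<in> S" "G \<beta> x = affine_map n (fst \<sigma> \<beta>) (snd \<sigma> \<beta>) x"
      using pieces xy(1) by blast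
    obtain \<tau> where \<tau>: "\<tau> \<in> S" "G \<beta> y = affine_map n (fst \<tau> \<beta>) (snd \<tau> \<beta>) y"
      using pieces xy(2) by blast
    have Lw: "(\<Sum>b<2*n+1. L \<sigma> \<tau> \<beta> c b * secant_vector n x y b) = G \<beta> x c - G \<beta> y c" for c
      unfolding L_def \<sigma>(2) \<tau>(2) by (rule secant_matrix_mult)
    obtain c where "c < p" "G \<beta> x c \<noteq> G \<beta> y c"
      using vecs_neq_coordinate[OF poly_pw_affine_vecs[OF G xy(1)] poly_pw_affine_vecs[OF G xy(2)] xy(3)] .
    then have "\<exists>c<p. (\<Sum>b<2*n+1. L \<sigma> \<tau> \<beta> c b * secant_vector n x y b) \<noteq> 0"
      unfolding Lw by auto
    moreover have "(\<Sum>c<p. \<beta> (j, a, c) * (\<Sum>b<2*n+1. L \<sigma> \<tau> \<beta> c b * secant_vector n x y b)) = 0"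
      if "a < q" for a
      unfolding Lw using fun_cong[OF same, of a] that
      by (simp add: lin_def right_diff_distrib sum_subtractf)
    ultimately have "\<beta> \<in> K \<sigma> \<tau>" unfolding K_def by blast
    with \<sigma>(1) \<tau>(1) show "\<beta> \<in> (\<Union>\<rho>\<in>S \<times> S. K (fst \<rho>) (snd \<rho>))"
      by (intro UN_I[of "(\<sigma>, \<tau>)"]) simp_all
  qed
  ultimately show ?thesis by (rule in_proper_algebraic_set_subset)
qed

section \<open>The composed network\<close>

lemma finite_Bidx: "finite (Bidx d k)"
proof -
  have "Bidx d k = (\<Union>j\<in>{1..k}. {j} \<times> {..<d (2*j)} \<times> {..<d (2*j - 1)})"
    unfolding Bidx_def by auto
  then show ?thesis by simp
qed

lemma Bidx_mono: "j \<le> j' \<Longrightarrow> Bidx d j \<subseteq> Bidx d j'"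
  unfolding Bidx_def by auto

lemma compF_Suc:
  "compF d f \<beta> (Suc j) = (\<lambda>x. lin (d (2*j + 1)) (d (2*j + 2)) (\<lambda>a c. \<beta> (Suc j, a, c)) (f (Suc j) (compF d f \<beta> j x)))"
  by (simp add: fun_eq_iff)

lemma compF_poly_pw_affine:
  assumes "d 0 = n" and nets: "\<And>j. j < k \<Longrightarrow> is_relu_net (d (2*j)) (d (2*j + 1)) (f (Suc j))"
  shows "j \<le> k \<Longrightarrow> poly_pw_affine (Bidx d j) n (d (2*j)) (\<lambda>\<beta>. compF d f \<beta> j)"
proof (induction j)
  case 0
  then show ?case using poly_pw_affine_id \<open>d 0 = n\<close> by simp
next
  case (Suc j)
  then have "j < k" "j \<le> k" by simp_all
  have "poly_pw_affine (Bidx d j) n (d (2*j + 1)) (\<lambda>\<beta> x. f (Suc j) (compF d f \<beta> j x))"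
    by (rule poly_pw_affine_relu_net[OF nets[OF \<open>j < k\<close>] Suc.IH[OF \<open>j \<le> k\<close>]])
  then have "poly_pw_affine (Bidx d (Suc j)) n (d (2*j + 1)) (\<lambda>\<beta> x. f (Suc j) (compF d f \<beta> j x))"
    by (rule poly_pw_affine_mono) (simp add: Bidx_mono)
  then have "poly_pw_affine (Bidx d (Suc j)) n (d (2*j + 2))
      (\<lambda>\<beta> x. lin (d (2*j + 1)) (d (2*j + 2)) (\<lambda>r c. \<beta> (Suc j, r, c)) (f (Suc j) (compF d f \<beta> j x)))"
    by (rule poly_pw_affine_lin) (auto simp: Bidx_def intro: polyfun_var)
  then show ?case by (simp add: mult_2 add.commute)
qed

lemma compF_noninjective_algebraic:
  assumes "d 0 = n"
    and nets: "\<And>j. j < k \<Longrightarrow> is_relu_net (d (2*j)) (d (2*j + 1)) (f (Suc j))"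
    and inj: "\<And>j. j < k \<Longrightarrow> inj_on (f (Suc j)) (vecs (d (2*j)))"
    and wide: "\<And>j. j < k \<Longrightarrow> 2*n + 1 \<le> d (2*j + 2)"
  shows "j \<le> k \<Longrightarrow> in_proper_algebraic_set (Bidx d j) {\<beta>. \<not> inj_on (compF d f \<beta> j) (vecs n)}"
proof (induction j)
  case 0
  then show ?case by (simp add: in_proper_algebraic_set_empty)
next
  case (Suc j)
  then have "j < k" by simp
  define G where "G = (\<lambda>\<beta> x. f (Suc j) (compF d f \<beta> j x))"
  have compF: "poly_pw_affine (Bidx d j) n (d (2*j)) (\<lambda>\<beta>. compF d f \<beta> j)"
    using compF_poly_pw_affine[OF \<open>d 0 = n\<close> nets] \<open>j < k\<close> by simp
  have G: "poly_pw_affine (Bidx d j) n (d (2*j + 1)) G"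
    unfolding G_def by (rule poly_pw_affine_relu_net[OF nets[OF \<open>j < k\<close>] compF])
  have inj_G: "inj_on (G \<beta>) (vecs n)" if "inj_on (compF d f \<beta> j) (vecs n)" for \<beta>
  proof -
    have "compF d f \<beta> j ` vecs n \<subseteq> vecs (d (2*j))" using poly_pw_affine_vecs[OF compF] by blast
    then have "inj_on (f (Suc j)) (compF d f \<beta> j ` vecs n)" by (rule inj_on_subset[OF inj[OF \<open>j < k\<close>]])
    with that have "inj_on (f (Suc j) \<circ> compF d f \<beta> j) (vecs n)" by (rule comp_inj_on)
    then show ?thesis by (simp add: G_def comp_def)
  qed
  have sub: "{\<beta>. \<not> inj_on (compF d f \<beta> (Suc j)) (vecs n)} \<subseteq> {\<beta>. \<not> inj_on (compF d f \<beta> j) (vecs n)} \<union>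
      {\<beta>. inj_on (G \<beta>) (vecs n) \<and>
        \<not> inj_on (\<lambda>x. lin (d (2*j + 1)) (d (2*j + 2)) (\<lambda>a c. \<beta> (Suc j, a, c)) (G \<beta> x)) (vecs n)}"
    using inj_G unfolding compF_Suc G_def by blast
  have earlier: "in_proper_algebraic_set (Bidx d (Suc j)) {\<beta>. \<not> inj_on (compF d f \<beta> j) (vecs n)}"
    using Suc.IH \<open>j < k\<close> Bidx_mono[of j "Suc j" d] by (simp add: in_proper_algebraic_set_mono)
  have new_layer: "in_proper_algebraic_set (Bidx d (Suc j)) {\<beta>. inj_on (G \<beta>) (vecs n) \<and>
      \<not> inj_on (\<lambda>x. lin (d (2*j + 1)) (d (2*j + 2)) (\<lambda>a c. \<beta> (Suc j, a, c)) (G \<beta> x)) (vecs n)}"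
    using \<open>j < k\<close>
    by (intro noninjective_layer_algebraic[OF G Bidx_mono _ _ wide[OF \<open>j < k\<close>]]) (auto simp: Bidx_def)
  show ?case
    by (rule in_proper_algebraic_set_subset[OF in_proper_algebraic_set_Un[OF earlier new_layer] sub])
qed

theorem corollary2:
  fixes n m k :: nat
    and d :: "nat \<Rightarrow> nat"
    and f :: "nat \<Rightarrow> (nat \<Rightarrow> real) \<Rightarrow> (nat \<Rightarrow> real)"
    and M :: "'w measure"
    and B :: "'w \<Rightarrow> (nat \<times> nat \<times> nat \<Rightarrow> real)"
  assumes dpos: "\<forall>j\<le>2*k. d j > 0"
    and d0: "d 0 = n"
    and d2k: "d (2*k) = m"
    and m_ge: "m \<ge> 2*n + 1"
    and d_even: "\<forall>j\<le>2*k. even j \<and> j \<ge> 2 \<longrightarrow> d j \<ge> 2*n + 1"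
    and nets: "\<forall>j\<in>{1..k}. is_relu_net (d (2*j - 2)) (d (2*j - 1)) (f j)"
    and inj: "\<forall>j\<in>{1..k}. inj_on (f j) (vecs (d (2*j - 2)))"
    and P: "prob_space M"
    and Bmeas: "B \<in> measurable M (PiM (Bidx d k) (\<lambda>_. lborel))"
    and Bac: "absolutely_continuous (PiM (Bidx d k) (\<lambda>_. lborel))
                (distr M (PiM (Bidx d k) (\<lambda>_. lborel)) B)"
  shows "AE \<omega> in M. inj_on (compF d f (B \<omega>) k) (vecs n)"
proof -
  have "is_relu_net (d (2*j)) (d (2*j + 1)) (f (Suc j))" if "j < k" for j
    using nets[rule_format, of "Suc j"] that by simp
  moreover have "inj_on (f (Suc j)) (vecs (d (2*j)))" if "j < k" for j
    using inj[rule_format, of "Suc j"] that by simp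
  moreover have "2*n + 1 \<le> d (2*j + 2)" if "j < k" for j
    using d_even[rule_format, of "2*j + 2"] that by simp
  ultimately have "in_proper_algebraic_set (Bidx d k) {\<beta>. \<not> inj_on (compF d f \<beta> k) (vecs n)}"
    using compF_noninjective_algebraic[of d n k f k] d0 by blast
  then have "AE \<beta> in PiM (Bidx d k) (\<lambda>_. lborel). \<beta> \<notin> {\<beta>. \<not> inj_on (compF d f \<beta> k) (vecs n)}"
    by (rule AE_not_in_proper_algebraic_set[OF finite_Bidx])
  then have "AE \<beta> in PiM (Bidx d k) (\<lambda>_. lborel). inj_on (compF d f \<beta> k) (vecs n)"
    by simp
  then show ?thesis
    using AE_distrD[OF Bmeas] absolutely_continuous_AE[OF sets_distr Bac] by blast
qed

end
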